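(* The map from $\mathcal L_n$ to $\mathcal T_n$ which orders the children of each vertex according to their labels (increasingly) and then removes all labels is a bijection.
   Context: A rooted tree with vertex set $\{0,\dots,n\}$ is naturally labeled if labels increase towards the root and, for each $i$, all children of $i$ have labels smaller than all children of $i+1$; $\mathcal L_n$ is the set of such trees. An ordered rooted tree is an unlabeled rooted tree together with a linear order on the children of each vertex; $\mathcal T_n$ is the set of ordered rooted trees with $n+1$ vertices. *)

theory Defs
  imports Main
begin

text \<open>Equality of terms is exactly isomorphism of ordered
rooted trees, so this type represents unlabeled ordered rooted trees.\<close>
datatype otree = Node "otree list"

fun num_vertices :: "otree \<Rightarrow> nat" where
  "num_vertices (Node ts) = Suc (sum_list (map num_vertices ts))"

definition ordered_trees :: "nat \<Rightarrow> otree set" where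
  "ordered_trees n = {t. num_vertices t = Suc n}"

text \<open>A rooted tree on vertex set {0..n} whose labels increase towards the root
has root n, and is encoded by its parent list ps of length n:
ps ! i is the parent of vertex i (i < n), and ps ! i > i.
Natural labeling: children of i have smaller labels than children of j
whenever i < j.\<close>
definition naturally_labeled_trees :: "nat \<Rightarrow> nat list set" where
  "naturally_labeled_trees n =
     {ps. length ps = n
        \<and> (\<forall>i<n. i < ps ! i \<and> ps ! i \<le> n)
        \<and> (\<forall>a<n. \<forall>b<n. ps ! a < ps ! b \<longrightarrow> a < b)}"

function subtree_of :: "nat list \<Rightarrow> nat \<Rightarrow> otree" where
  "subtree_of ps v = Node (map (subtree_of ps) [c \<leftarrow> [0..<v]. ps ! c = v])"
  by auto
termination by (relation "measure snd") auto

definition forget_labels :: "nat \<Rightarrow> nat list \<Rightarrow> otree" where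
  "forget_labels n ps = subtree_of ps n"

end

theory Submission
  imports Defs
begin

text \<open>
An ordered tree is determined by the child counts of its vertices listed in breadth-first
order.  In a naturally labeled tree the parent list is weakly increasing, so the tree is
determined by the number of children of each vertex; moreover, the breadth-first order that
enqueues children from the largest label down visits the vertices exactly in the order
n, n - 1, ..., 0.  Hence forgetting the labels preserves the degree sequence, which gives
injectivity.  The degree sequences of ordered trees satisfy a ballot condition (the queue
never empties early), which is exactly the condition i < parent i needed to rebuild a
naturally labeled tree from its degrees; this gives surjectivity.
\<close>

declare subtree_of.simps[simp del]

function bfs_degrees :: "otree list \<Rightarrow> nat list" where
  "bfs_degrees [] = []"
| "bfs_degrees (Node ts # q) = length ts # bfs_degrees (q @ rev ts)"
  by pat_completeness auto
termination
  by (relation "measure (\<lambda>q. sum_list (map num_vertices q))") (auto simp: rev_map[symmetric])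

lemma bfs_degrees_eq_imp_eq:
  "length q1 = length q2 \<Longrightarrow> bfs_degrees q1 = bfs_degrees q2 \<Longrightarrow> q1 = q2"
proof (induction q1 arbitrary: q2 rule: bfs_degrees.induct)
  case 1
  then show ?case by simp
next
  case (2 ts q)
  then obtain ts' q' where q2: "q2 = Node ts' # q'"
    by (metis length_Suc_conv otree.exhaust)
  with "2.prems" have "length ts = length ts'" "length q = length q'"
    and "bfs_degrees (q @ rev ts) = bfs_degrees (q' @ rev ts')" by auto
  then have "q @ rev ts = q' @ rev ts'" using "2.IH"[of "q' @ rev ts'"] by simp
  with \<open>length q = length q'\<close> q2 show ?case by simp
qed

lemma length_bfs_degrees: "length (bfs_degrees q) = sum_list (map num_vertices q)"
  by (induction q rule: bfs_degrees.induct) (auto simp: rev_map[symmetric])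

lemma sum_list_bfs_degrees:
  "sum_list (bfs_degrees q) + length q = sum_list (map num_vertices q)"
  by (induction q rule: bfs_degrees.induct) (auto simp: rev_map[symmetric])

text \<open>Before step k the queue holds length q + (sum of the first k degrees) - k trees,
  and it is nonempty.\<close>
lemma bfs_degrees_ballot:
  "k < length (bfs_degrees q) \<Longrightarrow> k < sum_list (take k (bfs_degrees q)) + length q"
proof (induction q arbitrary: k rule: bfs_degrees.induct)
  case 1
  then show ?case by simp
next
  case (2 ts q)
  show ?case
  proof (cases k)
    case (Suc j)
    with "2.prems" "2.IH"[of j]
    have "j < sum_list (take j (bfs_degrees (q @ rev ts))) + length (q @ rev ts)" by simp
    with Suc show ?thesis by simp
  qed simp
qed

lemma sum_list_take_mono:
  "k \<le> k' \<Longrightarrow> sum_list (take k (xs::nat list)) \<le> sum_list (take k' xs)"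
  by (metis le_add1 le_add_diff_inverse sum_list_append take_add)

lemma naturally_labeled_trees_iff_sorted:
  "ps \<in> naturally_labeled_trees n \<longleftrightarrow>
     length ps = n \<and> sorted ps \<and> (\<forall>i<n. i < ps ! i \<and> ps ! i \<le> n)"
proof -
  have "(\<forall>a<length ps. \<forall>b<length ps. ps ! a < ps ! b \<longrightarrow> a < b) \<longleftrightarrow> sorted ps"
    unfolding sorted_iff_nth_mono by (meson le_less_trans not_le)
  then show ?thesis unfolding naturally_labeled_trees_def by auto
qed

definition count_le :: "nat list \<Rightarrow> nat \<Rightarrow> nat" where
  "count_le xs v = card {c. c < length xs \<and> xs ! c \<le> v}"

lemma count_le_le_length: "count_le xs v \<le> length xs"
  unfolding count_le_def by (rule card_mono[of "{..<length xs}", simplified]) auto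

lemma count_le_mono: "v \<le> w \<Longrightarrow> count_le xs v \<le> count_le xs w"
  unfolding count_le_def by (rule card_mono) auto

lemma sorted_nth_le_iff_less_count_le:
  assumes "sorted xs" "c < length xs"
  shows "xs ! c \<le> v \<longleftrightarrow> c < count_le xs v"
proof -
  let ?S = "{c. c < length xs \<and> xs ! c \<le> v}"
  have fin: "finite ?S" by simp
  have mono: "xs ! a \<le> xs ! b" if "a \<le> b" "b < length xs" for a b
    using assms(1) that by (simp add: sorted_iff_nth_mono)
  show ?thesis
  proof
    assume "xs ! c \<le> v"
    then have "{..c} \<subseteq> ?S" using assms(2) mono[of _ c] by fastforce
    then have "card {..c} \<le> card ?S" by (rule card_mono[OF fin])
    then show "c < count_le xs v" unfolding count_le_def by simp
  next
    assume "c < count_le xs v"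
    show "xs ! c \<le> v"
    proof (rule ccontr)
      assume "\<not> xs ! c \<le> v"
      have "b < c" if "b \<in> ?S" for b
      proof (rule ccontr)
        assume "\<not> b < c"
        with that mono[of c b] have "xs ! c \<le> v" by simp
        with \<open>\<not> xs ! c \<le> v\<close> show False ..
      qed
      then have "?S \<subseteq> {..<c}" by blast
      then have "card ?S \<le> card {..<c}" by (rule card_mono[OF finite_lessThan])
      with \<open>c < count_le xs v\<close> show False unfolding count_le_def by simp
    qed
  qed
qed

lemma sorted_eq_if_count_le_eq:
  assumes "sorted xs" "sorted ys" "length xs = length ys"
    and "\<And>v. count_le xs v = count_le ys v"
  shows "xs = ys"
proof (rule nth_equalityI)
  fix c assume c: "c < length xs"
  have "xs ! c \<le> v \<longleftrightarrow> ys ! c \<le> v" for v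
    using sorted_nth_le_iff_less_count_le[OF assms(1) c]
      sorted_nth_le_iff_less_count_le[OF assms(2)] c assms(3,4) by simp
  then show "xs ! c = ys ! c" by (metis order.refl order_antisym)
qed (rule assms(3))

definition num_children :: "nat list \<Rightarrow> nat \<Rightarrow> nat" where
  "num_children ps v = card {c. c < length ps \<and> ps ! c = v}"

lemma count_le_0: "count_le ps 0 = num_children ps 0"
  unfolding count_le_def num_children_def by simp

lemma count_le_Suc: "count_le ps (Suc v) = count_le ps v + num_children ps (Suc v)"
proof -
  have "{c. c < length ps \<and> ps ! c \<le> Suc v} =
        {c. c < length ps \<and> ps ! c \<le> v} \<union> {c. c < length ps \<and> ps ! c = Suc v}"
    by auto
  then show ?thesis
    unfolding count_le_def num_children_def by (simp add: card_Un_disjoint disjoint_iff)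
qed

context
  fixes n :: nat and ps :: "nat list"
  assumes ps: "ps \<in> naturally_labeled_trees n"
begin

lemma naturally_labeled_length: "length ps = n"
  and naturally_labeled_sorted: "sorted ps"
  and naturally_labeled_parent_bounds: "i < n \<Longrightarrow> i < ps ! i \<and> ps ! i \<le> n"
  using ps by (simp_all add: naturally_labeled_trees_iff_sorted)

lemma naturally_labeled_parent_le_iff:
  "c < n \<Longrightarrow> ps ! c \<le> v \<longleftrightarrow> c < count_le ps v"
  using sorted_nth_le_iff_less_count_le naturally_labeled_sorted naturally_labeled_length
  by simp

lemma naturally_labeled_count_le_0: "count_le ps 0 = 0"
  using naturally_labeled_parent_bounds unfolding count_le_def naturally_labeled_length
  by (metis (no_types, lifting) card.empty empty_Collect_eq le_zero_eq less_nat_zero_code)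

lemma naturally_labeled_count_le_self: "v \<le> n \<Longrightarrow> count_le ps v \<le> v"
  using naturally_labeled_parent_le_iff[of v v] naturally_labeled_parent_bounds[of v]
    count_le_le_length[of ps v] naturally_labeled_length
  by (cases "v < n") auto

lemma naturally_labeled_count_le_top: "n \<le> v \<Longrightarrow> count_le ps v = n"
proof -
  assume "n \<le> v"
  with naturally_labeled_parent_bounds
  have "{c. c < length ps \<and> ps ! c \<le> v} = {..<n}"
    unfolding naturally_labeled_length by fastforce
  then show ?thesis unfolding count_le_def by simp
qed

lemma naturally_labeled_children:
  assumes "Suc w \<le> n"
  shows "[c \<leftarrow> [0..<Suc w]. ps ! c = Suc w] = [count_le ps w..<count_le ps (Suc w)]"
proof (rule sorted_distinct_set_unique)
  have "c \<in> set [c \<leftarrow> [0..<Suc w]. ps ! c = Suc w] \<longleftrightarrow>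
        c \<in> set [count_le ps w..<count_le ps (Suc w)]" for c
  proof (cases "c < Suc w")
    case True
    with assms have "c < n" by simp
    have "ps ! c = Suc w \<longleftrightarrow> ps ! c \<le> Suc w \<and> \<not> ps ! c \<le> w" by auto
    also have "\<dots> \<longleftrightarrow> c < count_le ps (Suc w) \<and> \<not> c < count_le ps w"
      using naturally_labeled_parent_le_iff[OF \<open>c < n\<close>] by blast
    finally show ?thesis using True by (auto simp del: upt_Suc)
  next
    case False
    with naturally_labeled_count_le_self[OF assms] show ?thesis by (simp del: upt_Suc)
  qed
  then show "set [c \<leftarrow> [0..<Suc w]. ps ! c = Suc w] =
             set [count_le ps w..<count_le ps (Suc w)]"
    by blast
next
  show "sorted [c \<leftarrow> [0..<Suc w]. ps ! c = Suc w]"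
    by (metis sorted_upt sorted_wrt_filter)
qed (simp_all del: upt_Suc)

text \<open>The breadth-first queue invariant: once the vertices above v have been dequeued,
  the queue holds exactly the vertices c \<le> v whose parent is above v, in decreasing
  order.\<close>
lemma bfs_degrees_naturally_labeled_subtrees:
  "v \<le> n \<Longrightarrow> bfs_degrees (map (subtree_of ps) (rev [count_le ps v..<Suc v]))
                = rev (map (num_children ps) [0..<Suc v])"
proof (induction v)
  case 0
  have "subtree_of ps 0 = Node []" by (subst subtree_of.simps) simp
  then show ?case using naturally_labeled_count_le_0 count_le_0[of ps] by simp
next
  case (Suc w)
  let ?m = "count_le ps" and ?sub = "map (subtree_of ps)"
  have le: "?m w \<le> ?m (Suc w)" "?m (Suc w) \<le> Suc w"
    using count_le_mono naturally_labeled_count_le_self Suc.prems by auto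
  have node: "subtree_of ps (Suc w) = Node (?sub [?m w..<?m (Suc w)])"
    by (subst subtree_of.simps) (simp only: naturally_labeled_children[OF Suc.prems])
  have queue: "rev [?m (Suc w)..<Suc (Suc w)] = Suc w # rev [?m (Suc w)..<Suc w]"
    using le by simp
  have "[?m w..<Suc w] = [?m w..<?m (Suc w)] @ [?m (Suc w)..<Suc w]"
    using le upt_add_eq_append[of "?m w" "?m (Suc w)" "Suc w - ?m (Suc w)"] by simp
  then have requeue: "?sub (rev [?m (Suc w)..<Suc w]) @ rev (?sub [?m w..<?m (Suc w)])
                      = ?sub (rev [?m w..<Suc w])"
    by (simp add: rev_map)
  have "bfs_degrees (?sub (rev [?m (Suc w)..<Suc (Suc w)]))
      = num_children ps (Suc w) # bfs_degrees (?sub (rev [?m w..<Suc w]))"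
    unfolding queue using node requeue count_le_Suc[of ps w] by (simp del: upt_Suc)
  also have "\<dots> = rev (map (num_children ps) [0..<Suc (Suc w)])"
    using Suc by simp
  finally show ?case .
qed

lemma bfs_degrees_forget_labels:
  "bfs_degrees [forget_labels n ps] = rev (map (num_children ps) [0..<Suc n])"
  using bfs_degrees_naturally_labeled_subtrees[OF order_refl] naturally_labeled_count_le_top
  by (simp add: forget_labels_def)

end

lemma forget_labels_in_ordered_trees:
  "ps \<in> naturally_labeled_trees n \<Longrightarrow> forget_labels n ps \<in> ordered_trees n"
  using length_bfs_degrees[of "[forget_labels n ps]"] bfs_degrees_forget_labels[of ps n]
  by (simp add: ordered_trees_def)

lemma inj_on_forget_labels: "inj_on (forget_labels n) (naturally_labeled_trees n)"
proof (rule inj_onI)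
  fix ps1 ps2
  assume ps1: "ps1 \<in> naturally_labeled_trees n" and ps2: "ps2 \<in> naturally_labeled_trees n"
    and "forget_labels n ps1 = forget_labels n ps2"
  then have "map (num_children ps1) [0..<Suc n] = map (num_children ps2) [0..<Suc n]"
    using bfs_degrees_forget_labels[OF ps1] bfs_degrees_forget_labels[OF ps2] by simp
  then have children: "num_children ps1 u = num_children ps2 u" if "u \<le> n" for u
    using that by (simp add: map_eq_conv del: upt_Suc)
  have "count_le ps1 v = count_le ps2 v" for v
  proof (cases "v \<le> n")
    case True
    then show ?thesis
      by (induction v) (simp_all add: count_le_0 count_le_Suc children)
  next
    case False
    then show ?thesis
      using naturally_labeled_count_le_top[OF ps1] naturally_labeled_count_le_top[OF ps2] by simp
  qed
  then show "ps1 = ps2"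
    using sorted_eq_if_count_le_eq naturally_labeled_sorted naturally_labeled_length ps1 ps2
    by metis
qed

text \<open>The witness gives vertex c the least parent v with c < M v.\<close>
lemma naturally_labeled_tree_of_counts:
  fixes M :: "nat \<Rightarrow> nat"
  assumes "mono M" and below: "\<And>v. v < n \<Longrightarrow> M v \<le> v" and top: "M n = n"
  shows "\<exists>ps \<in> naturally_labeled_trees n. \<forall>v \<le> n. count_le ps v = M v"
proof -
  define p where "p c = (LEAST v. c < M v)" for c
  have p_spec: "c < M (p c)" "p c \<le> n" if "c < n" for c
    using that top LeastI[of "\<lambda>v. c < M v" n] Least_le[of "\<lambda>v. c < M v" n]
    by (simp_all add: p_def)
  have p_le_iff: "p c \<le> v \<longleftrightarrow> c < M v" if "c < n" for c v
    using p_spec[OF that] monoD[OF \<open>mono M\<close>, of "p c" v] Least_le[of "\<lambda>v. c < M v" v]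
    by (auto simp: p_def)
  have p_mono: "p a \<le> p b" if "a \<le> b" "b < n" for a b
    using p_le_iff[of a "p b"] p_spec(1)[OF that(2)] that by simp
  define ps where "ps = map p [0..<n]"
  have len: "length ps = n" and nth_ps: "c < n \<Longrightarrow> ps ! c = p c" for c
    by (simp_all add: ps_def)
  have "sorted ps"
    unfolding sorted_iff_nth_mono len using nth_ps p_mono by simp
  moreover have "i < ps ! i" if "i < n" for i
    using p_le_iff[OF that, of i] below[OF that] nth_ps[OF that] by auto
  ultimately have "ps \<in> naturally_labeled_trees n"
    using p_spec(2) nth_ps len by (simp add: naturally_labeled_trees_iff_sorted)
  moreover have "count_le ps v = M v" if "v \<le> n" for v
  proof -
    have "M v \<le> n" using monoD[OF \<open>mono M\<close> that] top by simp
    with p_le_iff nth_ps len have "{c. c < length ps \<and> ps ! c \<le> v} = {..<M v}"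
      by auto
    then show ?thesis by (simp add: count_le_def)
  qed
  ultimately show ?thesis by blast
qed

lemma prefix_sum_rev_bfs_degrees_le:
  assumes "num_vertices t = Suc n" "v < n"
  shows "sum_list (take (Suc v) (rev (bfs_degrees [t]))) \<le> v"
proof -
  let ?ds = "bfs_degrees [t]" and ?k = "n - v"
  have len: "length ?ds = Suc n" and sum: "sum_list ?ds = n"
    using assms(1) length_bfs_degrees[of "[t]"] sum_list_bfs_degrees[of "[t]"] by simp_all
  have "?k < length ?ds" using len by simp
  from bfs_degrees_ballot[OF this] have "?k \<le> sum_list (take ?k ?ds)" by simp
  moreover have "sum_list (take (Suc v) (rev ?ds)) = sum_list (drop ?k ?ds)"
    using len by (simp add: take_rev)
  moreover have "sum_list (take ?k ?ds) + sum_list (drop ?k ?ds) = n"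
    using sum by (metis append_take_drop_id sum_list_append)
  ultimately show ?thesis using assms(2) by linarith
qed

lemma ordered_trees_subset_image_forget_labels:
  "ordered_trees n \<subseteq> forget_labels n ` naturally_labeled_trees n"
proof
  fix t assume t: "t \<in> ordered_trees n"
  define ds where "ds = rev (bfs_degrees [t])"
  define M where "M v = sum_list (take (Suc v) ds)" for v
  have nv: "num_vertices t = Suc n" using t by (simp add: ordered_trees_def)
  then have len: "length ds = Suc n" and "sum_list ds = n"
    using length_bfs_degrees[of "[t]"] sum_list_bfs_degrees[of "[t]"] by (simp_all add: ds_def)
  then have "M n = n" by (simp add: M_def)
  moreover have "mono M"
    by (rule monoI) (simp add: M_def sum_list_take_mono)
  moreover have "M v \<le> v" if "v < n" for v
    using prefix_sum_rev_bfs_degrees_le[OF nv that] by (simp add: M_def ds_def)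
  ultimately obtain ps where ps: "ps \<in> naturally_labeled_trees n"
    and counts: "\<And>v. v \<le> n \<Longrightarrow> count_le ps v = M v"
    using naturally_labeled_tree_of_counts by blast
  have "num_children ps u = ds ! u" if "u \<le> n" for u
  proof (cases u)
    case 0
    then show ?thesis
      using counts[of 0] count_le_0[of ps] len by (simp add: M_def take_Suc_conv_app_nth)
  next
    case (Suc w)
    then show ?thesis using counts[of u] counts[of w] count_le_Suc[of ps w] that len
      by (simp add: M_def take_Suc_conv_app_nth)
  qed
  then have "map (num_children ps) [0..<Suc n] = ds"
    using len by (intro nth_equalityI) (simp_all del: upt_Suc)
  then have "bfs_degrees [forget_labels n ps] = bfs_degrees [t]"
    using bfs_degrees_forget_labels[OF ps] by (simp add: ds_def)
  then have "[forget_labels n ps] = [t]" by (rule bfs_degrees_eq_imp_eq[rotated]) simp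
  with ps show "t \<in> forget_labels n ` naturally_labeled_trees n" by auto
qed

theorem corollary3p8:
  shows "bij_betw (forget_labels n) (naturally_labeled_trees n) (ordered_trees n)"
  unfolding bij_betw_def
  using inj_on_forget_labels forget_labels_in_ordered_trees
    ordered_trees_subset_image_forget_labels
  by blast

end
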